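(* There exist absolute constants $c,C>0$ such that the following holds. Let $r\ge1$ with $r\le c\sqrt{\log n}$, and let $P_1,\dots,P_n\colon\mathbb{F}_2^m\to\mathbb{F}_2$ be functions with $\operatorname{rank}_1(P_i)\le r$ for all $i$. Let $\mathcal{P}$ be the distribution of $(P_1(X),\dots,P_n(X))$ for $X$ uniform on $\mathbb{F}_2^m$. Then \[ \|\mathcal{P}-\mathrm{Ber}(1/3)^{\otimes n}\|_{\mathtt{TV}}\ \ge\ 1-C\,\frac{2^{r/2}}{n^{1/(r+1)}}. \]
   Context: Logarithms are base 2. $\operatorname{rank}_1(P)$ is the smallest positive integer $k$ with $P=\Gamma(L_1,\dots,L_k)$ for polynomials $L_j$ of degree at most $1$ and some $\Gamma\colon\mathbb{F}_2^k\to\mathbb{F}_2$. Total variation distance: $\frac12\sum_x|\mathcal{D}_1(x)-\mathcal{D}_2(x)|$. *)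

theory Defs
  imports "HOL-Analysis.Analysis" "HOL-Library.Z2" "HOL-Library.FuncSet"
begin

text \<open>The vector space F_2^m, realised as extensional functions on the index set {0..<m}.\<close>
definition cube :: "nat \<Rightarrow> (nat \<Rightarrow> bit) set" where
  "cube m = {0..<m} \<rightarrow>\<^sub>E (UNIV :: bit set)"

definition affine_fn :: "nat \<Rightarrow> ((nat \<Rightarrow> bit) \<Rightarrow> bit) \<Rightarrow> bool" where
  "affine_fn m L \<longleftrightarrow> (\<exists>(a :: nat \<Rightarrow> bit) (b :: bit).
      \<forall>x \<in> cube m. L x = b + (\<Sum>i<m. a i * x i))"

definition rank1 :: "nat \<Rightarrow> ((nat \<Rightarrow> bit) \<Rightarrow> bit) \<Rightarrow> nat" where
  "rank1 m P = (LEAST k. 0 < k \<and>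
     (\<exists>(L :: nat \<Rightarrow> (nat \<Rightarrow> bit) \<Rightarrow> bit) (\<Gamma> :: (nat \<Rightarrow> bit) \<Rightarrow> bit).
        (\<forall>j<k. affine_fn m (L j)) \<and>
        (\<forall>x \<in> cube m. P x = \<Gamma> (\<lambda>j\<in>{0..<k}. L j x))))"

definition push_dist :: "nat \<Rightarrow> nat \<Rightarrow> (nat \<Rightarrow> (nat \<Rightarrow> bit) \<Rightarrow> bit) \<Rightarrow> (nat \<Rightarrow> bit) \<Rightarrow> real" where
  "push_dist m n P y =
     real (card {x \<in> cube m. (\<lambda>i\<in>{0..<n}. P i x) = y}) / 2 ^ m"

definition ber_prod :: "real \<Rightarrow> nat \<Rightarrow> (nat \<Rightarrow> bit) \<Rightarrow> real" where
  "ber_prod p n y = (\<Prod>i<n. if y i = 1 then p else 1 - p)"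

definition tv_dist :: "nat \<Rightarrow> ((nat \<Rightarrow> bit) \<Rightarrow> real) \<Rightarrow> ((nat \<Rightarrow> bit) \<Rightarrow> real) \<Rightarrow> real" where
  "tv_dist n D1 D2 = (1/2) * (\<Sum>y \<in> cube n. \<bar>D1 y - D2 y\<bar>)"

end

theory Submission
  imports Defs
begin

text \<open>
  The Bhattacharyya coefficient \<open>BC(\<mu>, \<nu>) = \<Sum>\<^sub>y \<surd>(\<mu>(y) \<nu>(y))\<close> satisfies
  \<open>TV(\<mu>, \<nu>) \<ge> 1 - BC(\<mu>, \<nu>)\<close>, so it suffices to show \<open>BC \<le> exp(-n \<gamma>\<^sub>s)\<close> for
  \<open>s = \<lfloor>r\<rfloor>\<close> and \<open>\<gamma>\<^sub>s = 2^(-8 (s + 1)^2)\<close>; for \<open>r \<le> \<surd>(log n) / 8\<close> this is at most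
  \<open>1 / \<surd>n \<le> 2^(r/2) / n^(1/(r+1))\<close>.

  The estimate is proved for \<open>X\<close> uniform on an arbitrary affine subspace \<open>\<Omega>\<close>, by induction on
  \<open>s\<close>, writing each \<open>P\<^sub>i\<close> as \<open>\<Gamma>\<^sub>i\<close> of at most \<open>s\<close> affine forms. Choose a maximal set \<open>S\<close> of
  indices whose forms are jointly linearly independent on \<open>\<Omega>\<close>. Independent forms are jointly
  uniform, so if \<open>S\<close> is large, the \<open>P\<^sub>i\<close> with \<open>i \<in> S\<close> are independent, each equal to \<open>1\<close>
  with a dyadic probability, at distance at least \<open>2^(-s) / 3\<close> from \<open>1/3\<close>; this gives
  \<open>BC \<le> (1 - 1 / (72 \<cdot> 4^s))^|S|\<close>. If \<open>S\<close> is small, split \<open>\<Omega>\<close> into the at most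
  \<open>2^(s |S|)\<close> atoms on which all forms of \<open>S\<close> are constant. The coefficient is subadditive
  over such a partition, and on each atom every \<open>P\<^sub>i\<close> needs at most \<open>s - 1\<close> forms: for
  \<open>i \<in> S\<close> it is constant, and for \<open>i \<notin> S\<close> the dependency granted by maximality becomes a
  dependency among the forms of \<open>P\<^sub>i\<close> alone.
\<close>

declare add_bit_eq_xor [simp del] mult_bit_eq_and [simp del]

lemma UNIV_bit: "(UNIV :: bit set) = {0, 1}"
  using bit.exhaust by auto

instance bit :: finite
  by standard (simp add: UNIV_bit)

lemma card_UNIV_bit [simp]: "card (UNIV :: bit set) = 2"
  by (simp add: UNIV_bit)

lemma sum_UNIV_bit: "(\<Sum>b\<in>UNIV. f b) = f 0 + f 1"
  for f :: "bit \<Rightarrow> 'a :: comm_monoid_add"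
  by (simp add: UNIV_bit)

lemma bit_add_eq_iff: "(a :: bit) + b = c \<longleftrightarrow> a = c + b"
  by (cases a; cases b; cases c) simp_all

lemma bit_neq_iff: "(a :: bit) \<noteq> b \<longleftrightarrow> a = b + 1"
  by (cases a; cases b) simp_all

lemma card_bit_funcset: "finite D \<Longrightarrow> card (D \<rightarrow>\<^sub>E (UNIV :: bit set)) = 2 ^ card D"
  by (simp add: card_funcsetE)

lemma finite_bit_funcset [simp]: "finite D \<Longrightarrow> finite (D \<rightarrow>\<^sub>E (UNIV :: bit set))"
  by (simp add: finite_PiE)

lemma finite_cube [simp]: "finite (cube m)"
  by (simp add: cube_def finite_PiE)

lemma card_cube: "card (cube m) = 2 ^ m"
  by (simp add: cube_def card_bit_funcset)

lemma card_eq_sum_card_fibers: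
  assumes "finite A" "finite B" "f ` A \<subseteq> B"
  shows "card A = (\<Sum>y\<in>B. card {x\<in>A. f x = y})"
  using sum.group[OF assms, of "\<lambda>_. 1 :: nat"] by simp

lemma restrict_eq_PiE_iff: "z \<in> PiE S B \<Longrightarrow> restrict y S = z \<longleftrightarrow> (\<forall>i\<in>S. y i = z i)"
  by (metis PiE_restrict restrict_apply' restrict_ext)

lemma choice_lessThan3:
  "\<forall>i<(n :: nat). \<exists>x y z. Q i x y z \<Longrightarrow> \<exists>f g h. \<forall>i<n. Q i (f i) (g i) (h i)"
  by metis

lemma finite_ex_maximal_subset:
  assumes "finite A" "Q {}"
  obtains S where "S \<subseteq> A" "Q S" "\<forall>i\<in>A - S. \<not> Q (insert i S)"
proof -
  let ?F = "{S. S \<subseteq> A \<and> Q S}"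
  have "?F \<subseteq> Pow A" by blast
  then have "finite ?F" by (rule finite_subset) (simp add: assms(1))
  moreover have "?F \<noteq> {}" using assms(2) by blast
  ultimately obtain S where S: "S \<in> ?F" and max: "\<forall>S'\<in>?F. S \<subseteq> S' \<longrightarrow> S = S'"
    by (metis finite_has_maximal)
  have "\<not> Q (insert i S)" if "i \<in> A - S" for i
  proof
    assume "Q (insert i S)"
    then have "insert i S \<in> ?F" using S that by blast
    then show False using max that by blast
  qed
  with S that show ?thesis by blast
qed

section \<open>Affine subspaces of the cube\<close>

definition cube_add3 :: "nat \<Rightarrow> (nat \<Rightarrow> bit) \<Rightarrow> (nat \<Rightarrow> bit) \<Rightarrow> (nat \<Rightarrow> bit) \<Rightarrow> nat \<Rightarrow> bit" where
  "cube_add3 m x y z = (\<lambda>i\<in>{0..<m}. x i + y i + z i)"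

text \<open>Over \<open>F\<^sub>2\<close> the sets closed under \<open>x + y + z\<close> are exactly the affine subspaces
  (and the empty set), and the functions respecting \<open>x + y + z\<close> are the affine ones.\<close>

definition affine_subspace :: "nat \<Rightarrow> (nat \<Rightarrow> bit) set \<Rightarrow> bool" where
  "affine_subspace m \<Omega> \<longleftrightarrow> \<Omega> \<subseteq> cube m \<and> (\<forall>x\<in>\<Omega>. \<forall>y\<in>\<Omega>. \<forall>z\<in>\<Omega>. cube_add3 m x y z \<in> \<Omega>)"

definition affine_on :: "nat \<Rightarrow> (nat \<Rightarrow> bit) set \<Rightarrow> ((nat \<Rightarrow> bit) \<Rightarrow> bit) \<Rightarrow> bool" where
  "affine_on m \<Omega> l \<longleftrightarrow> (\<forall>x\<in>\<Omega>. \<forall>y\<in>\<Omega>. \<forall>z\<in>\<Omega>. l (cube_add3 m x y z) = l x + l y + l z)"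

lemma cube_add3_in_cube: "cube_add3 m x y z \<in> cube m"
  by (simp add: cube_add3_def cube_def)

lemma affine_subspace_cube: "affine_subspace m (cube m)"
  by (simp add: affine_subspace_def cube_add3_in_cube)

lemma affine_subspace_finite: "affine_subspace m \<Omega> \<Longrightarrow> finite \<Omega>"
  unfolding affine_subspace_def using finite_cube finite_subset by blast

lemma cube_add3_cancel:
  assumes "z \<in> cube m"
  shows "cube_add3 m (cube_add3 m z x y) x y = z"
proof
  fix i
  show "cube_add3 m (cube_add3 m z x y) x y i = z i"
    using assms PiE_arb[of z "{0..<m}" _ i] by (simp add: cube_add3_def cube_def add.assoc)
qed

lemma affine_fn_affine_on:
  assumes "affine_fn m L" "\<Omega> \<subseteq> cube m"
  shows "affine_on m \<Omega> L"
  unfolding affine_on_def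
proof (intro ballI)
  fix x y z assume "x \<in> \<Omega>" "y \<in> \<Omega>" "z \<in> \<Omega>"
  then have xyz: "x \<in> cube m" "y \<in> cube m" "z \<in> cube m" using assms(2) by auto
  obtain a b where L: "\<And>x. x \<in> cube m \<Longrightarrow> L x = b + (\<Sum>i<m. a i * x i)"
    using assms(1) unfolding affine_fn_def by blast
  have "(\<Sum>i<m. a i * cube_add3 m x y z i) = (\<Sum>i<m. a i * x i) + (\<Sum>i<m. a i * y i) + (\<Sum>i<m. a i * z i)"
    by (simp add: cube_add3_def distrib_left sum.distrib)
  then show "L (cube_add3 m x y z) = L x + L y + L z"
    by (simp add: L xyz cube_add3_in_cube ac_simps)
qed

lemma affine_on_sum:
  assumes "\<forall>j\<in>T. affine_on m \<Omega> (L j)"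
  shows "affine_on m \<Omega> (\<lambda>x. \<Sum>j\<in>T. L j x)"
  using assms by (simp add: affine_on_def sum.distrib)

lemma affine_on_subset: "affine_on m \<Omega> l \<Longrightarrow> \<Omega>' \<subseteq> \<Omega> \<Longrightarrow> affine_on m \<Omega>' l"
  unfolding affine_on_def by blast

lemma affine_subspace_fiber:
  assumes "affine_subspace m \<Omega>" "\<forall>j\<in>D. affine_on m \<Omega> (L j)"
  shows "affine_subspace m {x\<in>\<Omega>. \<forall>j\<in>D. L j x = a j}"
  using assms by (auto simp: affine_subspace_def affine_on_def)

lemma card_fiber_affine_on:
  assumes \<Omega>: "affine_subspace m \<Omega>" and l: "affine_on m \<Omega> l"
    and x: "x0 \<in> \<Omega>" "x1 \<in> \<Omega>" "l x1 = l x0 + 1"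
  shows "2 * card {x\<in>\<Omega>. l x = c} = card \<Omega>"
proof -
  define f where "f z = cube_add3 m z x0 x1" for z
  have f: "f z \<in> \<Omega> \<and> l (f z) = l z + 1" if "z \<in> \<Omega>" for z
  proof
    show "f z \<in> \<Omega>" using that x \<Omega> unfolding f_def affine_subspace_def by blast
    have "l (f z) = l z + l x0 + l x1" using that x l unfolding f_def affine_on_def by blast
    then show "l (f z) = l z + 1" using x(3) by (simp add: add.assoc)
  qed
  have ff: "f (f z) = z" if "z \<in> \<Omega>" for z
    using that \<Omega> cube_add3_cancel unfolding f_def affine_subspace_def by blast
  have "bij_betw f {x\<in>\<Omega>. l x = c} {x\<in>\<Omega>. l x = c + 1}"
    by (rule bij_betw_byWitness[where f' = f]) (use f ff in \<open>auto simp: add.assoc\<close>)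
  then have "card {x\<in>\<Omega>. l x = c} = card {x\<in>\<Omega>. l x = c + 1}"
    by (rule bij_betw_same_card)
  moreover have "card \<Omega> = card {x\<in>\<Omega>. l x = c} + card {x\<in>\<Omega>. l x = c + 1}"
  proof -
    have "\<Omega> = {x\<in>\<Omega>. l x = c} \<union> {x\<in>\<Omega>. l x = c + 1}"
      using bit_neq_iff by blast
    moreover have "{x\<in>\<Omega>. l x = c} \<inter> {x\<in>\<Omega>. l x = c + 1} = {}" by auto
    moreover have "finite \<Omega>" using affine_subspace_finite[OF \<Omega>] .
    ultimately show ?thesis
      using card_Un_disjoint[of "{x\<in>\<Omega>. l x = c}" "{x\<in>\<Omega>. l x = c + 1}"] by simp
  qed
  ultimately show ?thesis by simp
qed

text \<open>If \<open>S\<close> is constant on the fibre of \<open>l\<close> through \<open>z\<close>, it is also constant on the other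
  fibre, which the translation \<open>x \<mapsto> x + w + z\<close> (\<open>w\<close> in that fibre) maps onto the first.\<close>

lemma affine_on_factors_through:
  assumes \<Omega>: "affine_subspace m \<Omega>" and l: "affine_on m \<Omega> l" and S: "affine_on m \<Omega> S"
    and z: "z \<in> \<Omega>" and const: "\<forall>x\<in>\<Omega>. l x = l z \<longrightarrow> S x = S z"
  shows "\<exists>f. \<forall>x\<in>\<Omega>. S x = f (l x)"
proof (cases "\<exists>w\<in>\<Omega>. l w \<noteq> l z")
  case True
  then obtain w where w: "w \<in> \<Omega>" "l w = l z + 1" using bit_neq_iff by blast
  have other: "S x = S w" if x: "x \<in> \<Omega>" "l x = l z + 1" for x
  proof -
    let ?y = "cube_add3 m x w z"
    have "?y \<in> \<Omega>" using \<Omega> x w z unfolding affine_subspace_def by blast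
    moreover have "l ?y = l x + l w + l z" using l x w z unfolding affine_on_def by blast
    then have "l ?y = l z" using x w by (cases "l z") simp_all
    ultimately have "S ?y = S z" using const by blast
    moreover have "S ?y = S x + S w + S z" using S x w z unfolding affine_on_def by blast
    ultimately show ?thesis by (cases "S x"; cases "S w"; cases "S z") simp_all
  qed
  have "S x = (if l x = l z then S z else S w)" if "x \<in> \<Omega>" for x
    using that const other[of x] bit_neq_iff[of "l x" "l z"] by auto
  then show ?thesis by (intro exI[of _ "\<lambda>b. if b = l z then S z else S w"]) blast
next
  case False
  then show ?thesis using const by (intro exI[of _ "\<lambda>_. S z"]) auto
qed

section \<open>Independent families of affine forms\<close>

text \<open>Linear independence of the forms \<open>L j\<close>, \<open>j \<in> D\<close>, modulo the constants, as functions
  on \<open>\<Omega>\<close>.\<close>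

definition independent_on :: "(nat \<Rightarrow> bit) set \<Rightarrow> 'j set \<Rightarrow> ('j \<Rightarrow> (nat \<Rightarrow> bit) \<Rightarrow> bit) \<Rightarrow> bool" where
  "independent_on \<Omega> D L \<longleftrightarrow> (\<forall>T\<subseteq>D. T \<noteq> {} \<longrightarrow> \<not> (\<exists>c. \<forall>x\<in>\<Omega>. (\<Sum>j\<in>T. L j x) = c))"

lemma independent_on_nonconst:
  assumes "independent_on \<Omega> D L" "d \<in> D"
  obtains x0 x1 where "x0 \<in> \<Omega>" "x1 \<in> \<Omega>" "L d x1 = L d x0 + 1"
proof -
  have "\<not> (\<exists>c. \<forall>x\<in>\<Omega>. (\<Sum>j\<in>{d}. L j x) = c)"
    using assms unfolding independent_on_def by blast
  then have nonconst: "\<exists>x\<in>\<Omega>. L d x \<noteq> c" for c by simp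
  then obtain x0 where "x0 \<in> \<Omega>" by blast
  moreover obtain x1 where "x1 \<in> \<Omega>" "L d x1 \<noteq> L d x0" using nonconst by blast
  ultimately show ?thesis using that bit_neq_iff by blast
qed

lemma independent_on_fiber:
  assumes \<Omega>: "affine_subspace m \<Omega>" and L: "\<forall>j\<in>insert d D. affine_on m \<Omega> (L j)"
    and ind: "independent_on \<Omega> (insert d D) L" and d: "d \<notin> D" and D: "finite D"
  shows "independent_on {x\<in>\<Omega>. L d x = c} D L"
  unfolding independent_on_def
proof (intro allI impI notI)
  fix T assume T: "T \<subseteq> D" "T \<noteq> {}" and "\<exists>c0. \<forall>x\<in>{x\<in>\<Omega>. L d x = c}. (\<Sum>j\<in>T. L j x) = c0"
  then obtain c0 where c0: "\<forall>x\<in>\<Omega>. L d x = c \<longrightarrow> (\<Sum>j\<in>T. L j x) = c0" by blast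
  obtain x0 x1 where x: "x0 \<in> \<Omega>" "x1 \<in> \<Omega>" "L d x1 = L d x0 + 1"
    using independent_on_nonconst[OF ind insertI1] .
  obtain z where z: "z \<in> \<Omega>" "L d z = c"
  proof (cases "L d x0 = c")
    case True
    then show ?thesis using that x(1) by blast
  next
    case False
    then have "L d x1 = c" using x(3) bit_neq_iff[of "L d x0" c] by simp
    then show ?thesis using that x(2) by blast
  qed
  have "affine_on m \<Omega> (\<lambda>x. \<Sum>j\<in>T. L j x)"
    using L T by (intro affine_on_sum) auto
  then have "\<exists>f. \<forall>x\<in>\<Omega>. (\<Sum>j\<in>T. L j x) = f (L d x)"
    using affine_on_factors_through[OF \<Omega> _ _ z(1)] L z c0 by simp
  then obtain f where f: "\<forall>x\<in>\<Omega>. (\<Sum>j\<in>T. L j x) = f (L d x)" by blast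
  consider "f 1 = f 0" | "f 1 = f 0 + 1" using bit_neq_iff by blast
  then show False
  proof cases
    case 1
    then have "f b = f 0" for b by (cases b) simp_all
    then have "\<forall>x\<in>\<Omega>. (\<Sum>j\<in>T. L j x) = f 0" using f by simp
    then show False using ind T unfolding independent_on_def by blast
  next
    case 2
    then have "b + f b = f 0" for b by (cases b) simp_all
    moreover have "d \<notin> T" "finite T" using T d D finite_subset by auto
    ultimately have "\<forall>x\<in>\<Omega>. (\<Sum>j\<in>insert d T. L j x) = f 0" using f by simp
    moreover have "insert d T \<subseteq> insert d D" using T by blast
    ultimately show False using ind unfolding independent_on_def by blast
  qed
qed

lemma card_fiber_independent_on:
  assumes "finite D" "affine_subspace m \<Omega>" "\<forall>j\<in>D. affine_on m \<Omega> (L j)" "independent_on \<Omega> D L"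
  shows "card {x\<in>\<Omega>. \<forall>j\<in>D. L j x = a j} * 2 ^ card D = card \<Omega>"
  using assms
proof (induction D arbitrary: \<Omega> rule: finite_induct)
  case empty
  then show ?case by simp
next
  case (insert d D)
  define \<Omega>' where "\<Omega>' = {x\<in>\<Omega>. L d x = a d}"
  obtain x0 x1 where "x0 \<in> \<Omega>" "x1 \<in> \<Omega>" "L d x1 = L d x0 + 1"
    using independent_on_nonconst[OF insert.prems(3) insertI1] .
  then have half: "2 * card \<Omega>' = card \<Omega>"
    unfolding \<Omega>'_def using insert.prems(1,2) by (intro card_fiber_affine_on) auto
  have "affine_subspace m \<Omega>'"
    using affine_subspace_fiber[OF insert.prems(1), of "{d}"] insert.prems(2) by (simp add: \<Omega>'_def)
  moreover have "\<forall>j\<in>D. affine_on m \<Omega>' (L j)"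
    using insert.prems(2) by (auto intro: affine_on_subset simp: \<Omega>'_def)
  moreover have "independent_on \<Omega>' D L"
    unfolding \<Omega>'_def using insert.prems insert.hyps by (intro independent_on_fiber) auto
  ultimately have "card {x\<in>\<Omega>'. \<forall>j\<in>D. L j x = a j} * 2 ^ card D = card \<Omega>'"
    by (rule insert.IH)
  moreover have "{x\<in>\<Omega>. \<forall>j\<in>insert d D. L j x = a j} = {x\<in>\<Omega>'. \<forall>j\<in>D. L j x = a j}"
    unfolding \<Omega>'_def by auto
  ultimately show ?case using half insert.hyps by simp
qed

definition represents :: "nat \<Rightarrow> (nat \<Rightarrow> bit) set \<Rightarrow> ((nat \<Rightarrow> bit) \<Rightarrow> bit) \<Rightarrow> 'j set \<Rightarrow>
    ('j \<Rightarrow> (nat \<Rightarrow> bit) \<Rightarrow> bit) \<Rightarrow> (('j \<Rightarrow> bit) \<Rightarrow> bit) \<Rightarrow> bool" where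
  "represents m \<Omega> P D L \<Gamma> \<longleftrightarrow>
     finite D \<and> (\<forall>j\<in>D. affine_fn m (L j)) \<and> (\<forall>x\<in>\<Omega>. P x = \<Gamma> (\<lambda>j\<in>D. L j x))"

lemma represents_subset: "represents m \<Omega> P D L \<Gamma> \<Longrightarrow> \<Omega>' \<subseteq> \<Omega> \<Longrightarrow> represents m \<Omega>' P D L \<Gamma>"
  unfolding represents_def by blast

lemma represents_remove:
  assumes rep: "represents m \<Omega> P D L \<Gamma>" and T: "j0 \<in> T" "T \<subseteq> D"
    and c: "\<forall>x\<in>\<Omega>. (\<Sum>j\<in>T. L j x) = c"
  shows "represents m \<Omega> P (D - {j0}) L
           (\<lambda>v. \<Gamma> (\<lambda>j\<in>D. if j = j0 then c + (\<Sum>k\<in>T - {j0}. v k) else v j))"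
proof -
  have "finite T" using rep T finite_subset unfolding represents_def by blast
  have "(\<lambda>j\<in>D. if j = j0 then c + (\<Sum>k\<in>T - {j0}. (\<lambda>j\<in>D - {j0}. L j x) k) else (\<lambda>j\<in>D - {j0}. L j x) j)
      = (\<lambda>j\<in>D. L j x)" if x: "x \<in> \<Omega>" for x
  proof (rule restrict_ext)
    have "(\<Sum>k\<in>T - {j0}. (\<lambda>j\<in>D - {j0}. L j x) k) = (\<Sum>k\<in>T - {j0}. L k x)"
      using T by (intro sum.cong) auto
    moreover have "c = L j0 x + (\<Sum>k\<in>T - {j0}. L k x)"
      using c x sum.remove[OF \<open>finite T\<close> T(1), of "\<lambda>k. L k x"] by simp
    ultimately show "(if j = j0 then c + (\<Sum>k\<in>T - {j0}. (\<lambda>j\<in>D - {j0}. L j x) k)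
        else (\<lambda>j\<in>D - {j0}. L j x) j) = L j x" if "j \<in> D" for j
      using that by (simp add: add.assoc)
  qed
  then show ?thesis using rep unfolding represents_def by simp
qed

lemma affine_fn_coordinate: "affine_fn m (\<lambda>x. if j < m then x j else 0)"
proof -
  have "(\<Sum>i<m. (if i = j then 1 else 0) * x i) = (\<Sum>i<m. if i = j then x i else (0 :: bit))" for x
    by (rule sum.cong) auto
  then show ?thesis
    unfolding affine_fn_def by (intro exI[of _ "\<lambda>i. if i = j then 1 else 0"] exI[of _ 0]) simp
qed

lemma represents_rank1:
  "\<exists>(D :: nat set) L \<Gamma>. represents m (cube m) Q D L \<Gamma> \<and> card D = rank1 m Q"
proof -
  define R where "R = (\<lambda>k. 0 < k \<and> (\<exists>(L :: nat \<Rightarrow> (nat \<Rightarrow> bit) \<Rightarrow> bit) \<Gamma>.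
    (\<forall>j<k. affine_fn m (L j)) \<and> (\<forall>x\<in>cube m. Q x = \<Gamma> (\<lambda>j\<in>{0..<k}. L j x))))"
  let ?L = "\<lambda>j (x :: nat \<Rightarrow> bit). if j < m then x j else 0"
  \<comment> \<open>the \<open>m\<close> coordinates plus one spare form: \<open>rank1\<close> only admits positive \<open>k\<close>\<close>
  have "Q x = Q (\<lambda>i\<in>{0..<m}. (\<lambda>j\<in>{0..<Suc m}. ?L j x) i)" if "x \<in> cube m" for x
    using that PiE_restrict[of x "{0..<m}" "\<lambda>_. UNIV"] by (simp add: cube_def cong: restrict_cong)
  then have "R (Suc m)"
    unfolding R_def using affine_fn_coordinate
    by (intro conjI exI[of _ ?L] exI[of _ "\<lambda>v. Q (\<lambda>i\<in>{0..<m}. v i)"]) simp_all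
  then have "R (rank1 m Q)"
    unfolding rank1_def R_def[symmetric] by (rule LeastI)
  then obtain L \<Gamma> where "\<forall>j<rank1 m Q. affine_fn m (L j)"
    "\<forall>x\<in>cube m. Q x = \<Gamma> (\<lambda>j\<in>{0..<rank1 m Q}. L j x)"
    unfolding R_def by blast
  then have "represents m (cube m) Q {0..<rank1 m Q} L \<Gamma>"
    unfolding represents_def by simp
  then show ?thesis by force
qed

section \<open>The Bhattacharyya coefficient\<close>

lemma sqrt_sum_le_sum_sqrt:
  assumes "\<forall>a\<in>A. 0 \<le> f a"
  shows "sqrt (\<Sum>a\<in>A. f a) \<le> (\<Sum>a\<in>A. sqrt (f a))"
proof -
  have "sqrt (\<Sum>a\<in>A. f a) = L2_set (\<lambda>a. sqrt (f a)) A"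
    unfolding L2_set_def using assms by (simp cong: sum.cong)
  also have "\<dots> \<le> (\<Sum>a\<in>A. sqrt (f a))" by (rule L2_set_le_sum) (use assms in simp)
  finally show ?thesis .
qed

lemma sum_sqrt_mult_le:
  assumes "\<forall>a\<in>A. 0 \<le> f a" "\<forall>a\<in>A. 0 \<le> g a"
  shows "(\<Sum>a\<in>A. sqrt (f a * g a)) \<le> sqrt (\<Sum>a\<in>A. f a) * sqrt (\<Sum>a\<in>A. g a)"
proof -
  have "(\<Sum>a\<in>A. sqrt (f a * g a)) = (\<Sum>a\<in>A. \<bar>sqrt (f a)\<bar> * \<bar>sqrt (g a)\<bar>)"
    using assms by (simp add: real_sqrt_mult)
  also have "\<dots> \<le> L2_set (\<lambda>a. sqrt (f a)) A * L2_set (\<lambda>a. sqrt (g a)) A"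
    by (rule L2_set_mult_ineq)
  also have "\<dots> = sqrt (\<Sum>a\<in>A. f a) * sqrt (\<Sum>a\<in>A. g a)"
    unfolding L2_set_def using assms by (simp cong: sum.cong)
  finally show ?thesis .
qed

lemma sqrt_prod: "sqrt (\<Prod>i\<in>S. f i) = (\<Prod>i\<in>S. sqrt (f i))"
  by (induction S rule: infinite_finite_induct) (simp_all add: real_sqrt_mult)

definition ber :: "real \<Rightarrow> bit \<Rightarrow> real" where
  "ber p b = (if b = 1 then p else 1 - p)"

lemma ber_prod_eq: "ber_prod p n y = (\<Prod>i\<in>{0..<n}. ber p (y i))"
  by (simp add: ber_prod_def ber_def atLeast0LessThan)

lemma ber_nonneg: "0 \<le> p \<Longrightarrow> p \<le> 1 \<Longrightarrow> 0 \<le> ber p b"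
  by (simp add: ber_def)

lemma ber_prod_nonneg: "0 \<le> p \<Longrightarrow> p \<le> 1 \<Longrightarrow> 0 \<le> ber_prod p n y"
  by (simp add: ber_prod_eq ber_nonneg prod_nonneg)

lemma sum_ber [simp]: "(\<Sum>b\<in>UNIV. ber p b) = 1"
  by (simp add: sum_UNIV_bit ber_def)

lemma sum_ber_prod_cylinder:
  assumes "S \<subseteq> {0..<n}"
  shows "(\<Sum>y\<in>{y\<in>cube n. \<forall>i\<in>S. y i = z i}. ber_prod p n y) = (\<Prod>i\<in>S. ber p (z i))"
proof -
  define B where "B i = (if i \<in> S then {z i} else UNIV)" for i
  have "y \<in> PiE {0..<n} B \<longleftrightarrow> y \<in> cube n \<and> (\<forall>i\<in>S. y i = z i)" for y
    using assms unfolding cube_def B_def PiE_iff by auto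
  then have "{y\<in>cube n. \<forall>i\<in>S. y i = z i} = PiE {0..<n} B" by blast
  then have "(\<Sum>y\<in>{y\<in>cube n. \<forall>i\<in>S. y i = z i}. ber_prod p n y) = (\<Prod>i\<in>{0..<n}. \<Sum>b\<in>B i. ber p b)"
    by (simp add: ber_prod_eq prod_sum_PiE)
  also have "\<dots> = (\<Prod>i\<in>{0..<n}. if i \<in> S then ber p (z i) else 1)"
    by (rule prod.cong) (simp_all add: B_def)
  also have "\<dots> = (\<Prod>i\<in>S. ber p (z i))"
    using assms by (simp add: prod.If_cases Int_absorb1)
  finally show ?thesis .
qed

text \<open>The Bhattacharyya coefficient of the law of \<open>(P\<^sub>1(X), \<dots>, P\<^sub>n(X))\<close>, \<open>X\<close> uniform
  on \<open>\<Omega>\<close>, and of \<open>Ber(p)\<^sup>\<otimes>\<^sup>n\<close>; it is \<open>0\<close> for \<open>\<Omega> = {}\<close>.\<close>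

definition bhattacharyya :: "real \<Rightarrow> nat \<Rightarrow> (nat \<Rightarrow> (nat \<Rightarrow> bit) \<Rightarrow> bit) \<Rightarrow> (nat \<Rightarrow> bit) set \<Rightarrow> real" where
  "bhattacharyya p n P \<Omega> =
     (\<Sum>y\<in>cube n. sqrt (card {x\<in>\<Omega>. (\<lambda>i\<in>{0..<n}. P i x) = y} / card \<Omega> * ber_prod p n y))"

lemma bhattacharyya_empty [simp]: "bhattacharyya p n P {} = 0"
  by (simp add: bhattacharyya_def)

lemma add_minus_two_sqrt_mult_le_abs_diff:
  fixes a b :: real
  assumes "0 \<le> a" "0 \<le> b"
  shows "a + b - 2 * sqrt (a * b) \<le> \<bar>a - b\<bar>"
proof -
  have "min a b \<le> sqrt (a * b)"
    using assms real_sqrt_le_mono[of "min a b * min a b" "a * b"]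
    by (simp add: mult_mono min_def)
  then show ?thesis by (simp add: min_def split: if_splits)
qed

lemma tv_dist_ge_one_minus_bhattacharyya:
  assumes "0 \<le> p" "p \<le> 1"
  shows "1 - bhattacharyya p n P (cube m) \<le> tv_dist n (push_dist m n P) (ber_prod p n)"
proof -
  let ?a = "push_dist m n P" and ?b = "ber_prod p n"
  have "card (cube m) = (\<Sum>y\<in>cube n. card {x\<in>cube m. (\<lambda>i\<in>{0..<n}. P i x) = y})"
    by (rule card_eq_sum_card_fibers) (auto simp: cube_def intro!: finite_PiE)
  then have "real (card (cube m)) = real (\<Sum>y\<in>cube n. card {x\<in>cube m. (\<lambda>i\<in>{0..<n}. P i x) = y})"
    by (rule arg_cong)
  then have "(\<Sum>y\<in>cube n. real (card {x\<in>cube m. (\<lambda>i\<in>{0..<n}. P i x) = y})) = 2 ^ m"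
    by (simp add: card_cube)
  then have sum_a: "(\<Sum>y\<in>cube n. ?a y) = 1"
    unfolding push_dist_def by (simp flip: sum_divide_distrib)
  have sum_b: "(\<Sum>y\<in>cube n. ?b y) = 1"
    using sum_ber_prod_cylinder[of "{}" n p] by simp
  have "bhattacharyya p n P (cube m) = (\<Sum>y\<in>cube n. sqrt (?a y * ?b y))"
    unfolding bhattacharyya_def push_dist_def card_cube by simp
  then have "2 - 2 * bhattacharyya p n P (cube m) = (\<Sum>y\<in>cube n. ?a y + ?b y - 2 * sqrt (?a y * ?b y))"
    using sum_a sum_b by (simp add: sum.distrib sum_subtractf sum_distrib_left)
  also have "\<dots> \<le> (\<Sum>y\<in>cube n. \<bar>?a y - ?b y\<bar>)"
    using assms by (intro sum_mono add_minus_two_sqrt_mult_le_abs_diff)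
      (simp_all add: push_dist_def ber_prod_nonneg)
  finally show ?thesis unfolding tv_dist_def by simp
qed

lemma card_filter_div_card_le:
  assumes "finite \<Omega>" "\<Omega>' \<subseteq> \<Omega>"
  shows "real (card {x\<in>\<Omega>'. Q x}) / card \<Omega> \<le> real (card {x\<in>\<Omega>'. Q x}) / card \<Omega>'"
proof (cases "\<Omega>' = {}")
  case False
  then have "0 < card \<Omega>'" using assms finite_subset card_gt_0_iff by blast
  moreover have "card \<Omega>' \<le> card \<Omega>" using assms by (rule card_mono)
  ultimately show ?thesis by (intro divide_left_mono) simp_all
qed simp

lemma bhattacharyya_le_sum_fibers:
  assumes p: "0 \<le> p" "p \<le> 1" and \<Omega>: "finite \<Omega>" and A: "finite A" "g ` \<Omega> \<subseteq> A"
  shows "bhattacharyya p n P \<Omega> \<le> (\<Sum>a\<in>A. bhattacharyya p n P {x\<in>\<Omega>. g x = a})"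
proof -
  let ?N = "\<lambda>\<Omega>' y. real (card {x\<in>\<Omega>'. (\<lambda>i\<in>{0..<n}. P i x) = y})"
  let ?q = "ber_prod p n"
  have "sqrt (?N \<Omega> y / card \<Omega> * ?q y)
      \<le> (\<Sum>a\<in>A. sqrt (?N {x\<in>\<Omega>. g x = a} y / card {x\<in>\<Omega>. g x = a} * ?q y))" for y
  proof -
    have "card {x\<in>\<Omega>. (\<lambda>i\<in>{0..<n}. P i x) = y}
        = (\<Sum>a\<in>A. card {x\<in>{x\<in>\<Omega>. (\<lambda>i\<in>{0..<n}. P i x) = y}. g x = a})"
      using \<Omega> A by (intro card_eq_sum_card_fibers) auto
    also have "\<dots> = (\<Sum>a\<in>A. card {x\<in>{x\<in>\<Omega>. g x = a}. (\<lambda>i\<in>{0..<n}. P i x) = y})"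
      by (intro sum.cong refl arg_cong[where f = card]) auto
    finally have N: "?N \<Omega> y = (\<Sum>a\<in>A. ?N {x\<in>\<Omega>. g x = a} y)"
      by (simp only: of_nat_sum)
    have "?N {x\<in>\<Omega>. g x = a} y / card \<Omega> \<le> ?N {x\<in>\<Omega>. g x = a} y / card {x\<in>\<Omega>. g x = a}" for a
      by (rule card_filter_div_card_le) (use \<Omega> in auto)
    then have "?N \<Omega> y / card \<Omega> * ?q y \<le> (\<Sum>a\<in>A. ?N {x\<in>\<Omega>. g x = a} y / card {x\<in>\<Omega>. g x = a} * ?q y)"
      unfolding N sum_divide_distrib sum_distrib_right
      using p by (intro sum_mono mult_right_mono ber_prod_nonneg)
    then have "sqrt (?N \<Omega> y / card \<Omega> * ?q y)
        \<le> sqrt (\<Sum>a\<in>A. ?N {x\<in>\<Omega>. g x = a} y / card {x\<in>\<Omega>. g x = a} * ?q y)"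
      by (rule real_sqrt_le_mono)
    also have "\<dots> \<le> (\<Sum>a\<in>A. sqrt (?N {x\<in>\<Omega>. g x = a} y / card {x\<in>\<Omega>. g x = a} * ?q y))"
      using p by (intro sqrt_sum_le_sum_sqrt) (simp add: ber_prod_nonneg)
    finally show ?thesis .
  qed
  then have "bhattacharyya p n P \<Omega>
      \<le> (\<Sum>y\<in>cube n. \<Sum>a\<in>A. sqrt (?N {x\<in>\<Omega>. g x = a} y / card {x\<in>\<Omega>. g x = a} * ?q y))"
    unfolding bhattacharyya_def by (intro sum_mono)
  also have "\<dots> = (\<Sum>a\<in>A. bhattacharyya p n P {x\<in>\<Omega>. g x = a})"
    unfolding bhattacharyya_def by (rule sum.swap)
  finally show ?thesis .
qed

text \<open>Data processing for the projection to the coordinates in \<open>S\<close>: Cauchy--Schwarz on each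
  of its fibres.\<close>

lemma bhattacharyya_le_marginal:
  assumes p: "0 \<le> p" "p \<le> 1" and \<Omega>: "finite \<Omega>" and S: "S \<subseteq> {0..<n}"
  shows "bhattacharyya p n P \<Omega> \<le> (\<Sum>z\<in>S \<rightarrow>\<^sub>E UNIV.
           sqrt (card {x\<in>\<Omega>. \<forall>i\<in>S. P i x = z i} / card \<Omega> * (\<Prod>i\<in>S. ber p (z i))))"
proof -
  let ?u = "\<lambda>y. real (card {x\<in>\<Omega>. (\<lambda>i\<in>{0..<n}. P i x) = y}) / card \<Omega>"
  let ?C = "\<lambda>z. {y\<in>cube n. \<forall>i\<in>S. y i = z i}"
  have "finite S" using S finite_subset by blast
  then have finite_S: "finite (S \<rightarrow>\<^sub>E (UNIV :: bit set))" by (simp add: finite_PiE)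
  have cyl: "{y \<in> cube n. restrict y S = z} = ?C z" if "z \<in> S \<rightarrow>\<^sub>E UNIV" for z
    using restrict_eq_PiE_iff[OF that] by blast
  have "bhattacharyya p n P \<Omega> = (\<Sum>z\<in>S \<rightarrow>\<^sub>E UNIV. \<Sum>y\<in>{y \<in> cube n. restrict y S = z}. sqrt (?u y * ber_prod p n y))"
    unfolding bhattacharyya_def by (rule sum.group[OF finite_cube finite_S, symmetric]) auto
  also have "\<dots> \<le> (\<Sum>z\<in>S \<rightarrow>\<^sub>E UNIV. sqrt (\<Sum>y\<in>?C z. ?u y) * sqrt (\<Sum>y\<in>?C z. ber_prod p n y))"
  proof (rule sum_mono)
    fix z :: "nat \<Rightarrow> bit" assume "z \<in> S \<rightarrow>\<^sub>E UNIV"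
    show "(\<Sum>y\<in>{y \<in> cube n. restrict y S = z}. sqrt (?u y * ber_prod p n y))
        \<le> sqrt (\<Sum>y\<in>?C z. ?u y) * sqrt (\<Sum>y\<in>?C z. ber_prod p n y)"
      unfolding cyl[OF \<open>z \<in> S \<rightarrow>\<^sub>E UNIV\<close>] using p
      by (intro sum_sqrt_mult_le) (simp_all add: ber_prod_nonneg)
  qed
  also have "\<dots> = (\<Sum>z\<in>S \<rightarrow>\<^sub>E UNIV.
      sqrt (card {x\<in>\<Omega>. \<forall>i\<in>S. P i x = z i} / card \<Omega> * (\<Prod>i\<in>S. ber p (z i))))"
  proof (rule sum.cong)
    fix z :: "nat \<Rightarrow> bit"
    have "card {x\<in>\<Omega>. \<forall>i\<in>S. P i x = z i} = (\<Sum>y\<in>?C z. card {x\<in>{x\<in>\<Omega>. \<forall>i\<in>S. P i x = z i}. (\<lambda>i\<in>{0..<n}. P i x) = y})"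
      using \<Omega> S by (intro card_eq_sum_card_fibers) (auto simp: cube_def finite_PiE)
    also have "\<dots> = (\<Sum>y\<in>?C z. card {x\<in>\<Omega>. (\<lambda>i\<in>{0..<n}. P i x) = y})"
    proof (intro sum.cong refl arg_cong[where f = card])
      fix y assume y: "y \<in> ?C z"
      have "P i x = z i" if "(\<lambda>i\<in>{0..<n}. P i x) = y" "i \<in> S" for x i
      proof -
        have "P i x = (\<lambda>i\<in>{0..<n}. P i x) i" using \<open>i \<in> S\<close> S by auto
        then show ?thesis using that y by auto
      qed
      then show "{x\<in>{x\<in>\<Omega>. \<forall>i\<in>S. P i x = z i}. (\<lambda>i\<in>{0..<n}. P i x) = y}
          = {x\<in>\<Omega>. (\<lambda>i\<in>{0..<n}. P i x) = y}" by blast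
    qed
    finally have "(\<Sum>y\<in>?C z. ?u y) = card {x\<in>\<Omega>. \<forall>i\<in>S. P i x = z i} / card \<Omega>"
      by (simp add: sum_divide_distrib)
    then show "sqrt (\<Sum>y\<in>?C z. ?u y) * sqrt (\<Sum>y\<in>?C z. ber_prod p n y)
        = sqrt (card {x\<in>\<Omega>. \<forall>i\<in>S. P i x = z i} / card \<Omega> * (\<Prod>i\<in>S. ber p (z i)))"
      using sum_ber_prod_cylinder[OF S] by (simp only: real_sqrt_mult)
  qed simp
  finally show ?thesis .
qed

lemma card_fiber_represented_independent:
  assumes \<Omega>: "affine_subspace m \<Omega>" and S: "finite S"
    and rep: "\<forall>i\<in>S. represents m \<Omega> (P i) (D i) (L i) (\<Gamma> i)"
    and ind: "independent_on \<Omega> (Sigma S D) (\<lambda>(i, j). L i j)"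
  shows "card {x\<in>\<Omega>. \<forall>i\<in>S. P i x = z i} * (\<Prod>i\<in>S. 2 ^ card (D i))
       = (\<Prod>i\<in>S. card {v \<in> D i \<rightarrow>\<^sub>E UNIV. \<Gamma> i v = z i}) * card \<Omega>"
proof -
  define pat where "pat x = (\<lambda>i\<in>S. \<lambda>j\<in>D i. L i j x)" for x
  define B where "B i = {v \<in> D i \<rightarrow>\<^sub>E UNIV. \<Gamma> i v = z i}" for i
  have D: "\<forall>i\<in>S. finite (D i)" using rep unfolding represents_def by blast
  then have G: "finite (Sigma S D)" using S by blast
  have finite_B: "finite (PiE S B)" using S D by (auto simp: B_def finite_PiE intro!: finite_PiE)
  have affine: "\<forall>p\<in>Sigma S D. affine_on m \<Omega> ((\<lambda>(i, j). L i j) p)"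
    using rep \<Omega> by (auto simp: represents_def affine_subspace_def intro: affine_fn_affine_on)
  have fiber: "card {x\<in>\<Omega>. pat x = a} * 2 ^ card (Sigma S D) = card \<Omega>" if a: "a \<in> PiE S B" for a
  proof -
    have a': "a \<in> PiE S (\<lambda>i. D i \<rightarrow>\<^sub>E UNIV)" using a by (auto simp: B_def PiE_iff)
    have "pat x = a \<longleftrightarrow> (\<forall>i\<in>S. (\<lambda>j\<in>D i. L i j x) = a i)" for x
      unfolding pat_def by (rule restrict_eq_PiE_iff[OF a'])
    also have "\<dots> x \<longleftrightarrow> (\<forall>i\<in>S. \<forall>j\<in>D i. L i j x = a i j)" for x
      using a' by (intro ball_cong refl restrict_eq_PiE_iff) auto
    finally have "pat x = a \<longleftrightarrow> (\<forall>(i, j)\<in>Sigma S D. L i j x = a i j)" for x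
      by auto
    then have "{x\<in>\<Omega>. pat x = a} = {x\<in>\<Omega>. \<forall>p\<in>Sigma S D. (\<lambda>(i, j). L i j) p x = (\<lambda>(i, j). a i j) p}"
      by auto
    then show ?thesis using card_fiber_independent_on[OF G \<Omega> affine ind, of "\<lambda>(i, j). a i j"] by simp
  qed
  have "P i x = \<Gamma> i (pat x i)" if "x \<in> \<Omega>" "i \<in> S" for x i
    using rep that unfolding represents_def pat_def by simp
  then have event: "{x\<in>\<Omega>. \<forall>i\<in>S. P i x = z i} = {x\<in>\<Omega>. pat x \<in> PiE S B}"
    by (auto simp: B_def pat_def PiE_iff)
  have "card {x\<in>\<Omega>. pat x \<in> PiE S B} = (\<Sum>a\<in>PiE S B. card {x\<in>{x\<in>\<Omega>. pat x \<in> PiE S B}. pat x = a})"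
    using finite_B affine_subspace_finite[OF \<Omega>] by (intro card_eq_sum_card_fibers) auto
  also have "\<dots> = (\<Sum>a\<in>PiE S B. card {x\<in>\<Omega>. pat x = a})"
    by (intro sum.cong refl arg_cong[where f = card]) auto
  finally have "card {x\<in>\<Omega>. \<forall>i\<in>S. P i x = z i} * 2 ^ card (Sigma S D) = card (PiE S B) * card \<Omega>"
    using fiber event by (simp add: sum_distrib_right)
  moreover have "(2 :: nat) ^ card (Sigma S D) = (\<Prod>i\<in>S. 2 ^ card (D i))"
    using S D by (simp add: card_SigmaI power_sum)
  ultimately show ?thesis using S by (simp add: card_PiE B_def)
qed

lemma bhattacharyya_le_prod_independent:
  assumes p: "0 \<le> p" "p \<le> 1" and \<Omega>: "affine_subspace m \<Omega>" "\<Omega> \<noteq> {}" and S: "S \<subseteq> {0..<n}"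
    and rep: "\<forall>i\<in>S. represents m \<Omega> (P i) (D i) (L i) (\<Gamma> i)"
    and ind: "independent_on \<Omega> (Sigma S D) (\<lambda>(i, j). L i j)"
  shows "bhattacharyya p n P \<Omega>
    \<le> (\<Prod>i\<in>S. \<Sum>b\<in>UNIV. sqrt (card {v \<in> D i \<rightarrow>\<^sub>E UNIV. \<Gamma> i v = b} / 2 ^ card (D i) * ber p b))"
proof -
  let ?f = "\<lambda>i b. sqrt (card {v \<in> D i \<rightarrow>\<^sub>E UNIV. \<Gamma> i v = b} / 2 ^ card (D i) * ber p b)"
  have "finite S" using S finite_subset by blast
  have fraction: "card {x\<in>\<Omega>. \<forall>i\<in>S. P i x = z i} / card \<Omega>
      = (\<Prod>i\<in>S. card {v \<in> D i \<rightarrow>\<^sub>E UNIV. \<Gamma> i v = z i} / 2 ^ card (D i))" for z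
  proof -
    have "real (card {x\<in>\<Omega>. \<forall>i\<in>S. P i x = z i}) * (\<Prod>i\<in>S. 2 ^ card (D i))
        = (\<Prod>i\<in>S. real (card {v \<in> D i \<rightarrow>\<^sub>E UNIV. \<Gamma> i v = z i})) * card \<Omega>"
      using arg_cong[OF card_fiber_represented_independent[OF \<Omega>(1) \<open>finite S\<close> rep ind, of z], of real]
      by simp
    moreover have "0 < card \<Omega>" using \<Omega> affine_subspace_finite card_gt_0_iff by blast
    moreover have "0 < (\<Prod>i\<in>S. (2 :: real) ^ card (D i))" by (simp add: prod_pos)
    ultimately show ?thesis by (simp add: divide_simps prod_dividef)
  qed
  have "sqrt (card {x\<in>\<Omega>. \<forall>i\<in>S. P i x = z i} / card \<Omega> * (\<Prod>i\<in>S. ber p (z i)))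
      = (\<Prod>i\<in>S. ?f i (z i))" for z
    unfolding fraction prod.distrib[symmetric] sqrt_prod ..
  then have "bhattacharyya p n P \<Omega> \<le> (\<Sum>z\<in>S \<rightarrow>\<^sub>E UNIV. \<Prod>i\<in>S. ?f i (z i))"
    using bhattacharyya_le_marginal[OF p affine_subspace_finite[OF \<Omega>(1)] S, where P = P] by (simp only:)
  also have "\<dots> = (\<Prod>i\<in>S. \<Sum>b\<in>UNIV. ?f i b)"
    by (rule prod_sum_PiE[symmetric]) (simp_all add: \<open>finite S\<close>)
  finally show ?thesis .
qed

section \<open>Dyadic probabilities are far from \<open>1/3\<close>\<close>

lemma sqrt_mult_add_sqrt_mult_le:
  fixes p q :: real
  assumes "0 \<le> p" "p \<le> 1" "0 \<le> q" "q \<le> 1"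
  shows "sqrt (p * q) + sqrt ((1 - p) * (1 - q)) \<le> 1 - (p - q)\<^sup>2 / 8"
proof -
  define a b c d where "a = sqrt p" "b = sqrt q" "c = sqrt (1 - p)" "d = sqrt (1 - q)"
  have sq: "a\<^sup>2 = p" "b\<^sup>2 = q" "c\<^sup>2 = 1 - p" "d\<^sup>2 = 1 - q"
    unfolding a_b_c_d_def using assms by simp_all
  have "0 \<le> a" "0 \<le> b" "a \<le> 1" "b \<le> 1" unfolding a_b_c_d_def using assms by simp_all
  then have "(a + b)\<^sup>2 \<le> 4" using power_mono[of "a + b" 2 2] by simp
  have "p - q = (a - b) * (a + b)" by (simp flip: sq add: algebra_simps power2_eq_square)
  then have "(p - q)\<^sup>2 = (a - b)\<^sup>2 * (a + b)\<^sup>2" by (simp add: power_mult_distrib)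
  also have "\<dots> \<le> (a - b)\<^sup>2 * 4" using \<open>(a + b)\<^sup>2 \<le> 4\<close> by (intro mult_left_mono) simp_all
  finally have "(p - q)\<^sup>2 \<le> 4 * (a - b)\<^sup>2" by simp
  moreover have "sqrt (p * q) + sqrt ((1 - p) * (1 - q)) = a * b + c * d"
    unfolding a_b_c_d_def using assms by (simp add: real_sqrt_mult)
  moreover have "a * b + c * d = 1 - ((a - b)\<^sup>2 + (c - d)\<^sup>2) / 2"
    by (simp add: power2_diff sq field_simps)
  moreover have "0 \<le> (c - d)\<^sup>2" by simp
  ultimately show ?thesis by argo
qed

lemma not_three_dvd_two_power: "\<not> (3 :: nat) dvd 2 ^ k"
proof
  assume "3 dvd (2 :: nat) ^ k"
  moreover have "coprime (3 :: nat) (2 ^ k)" by simp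
  ultimately show False using coprime_absorb_left[of "3 :: nat" "2 ^ k"] by simp
qed

lemma dyadic_dist_third_ge: "1 / (3 * 2 ^ k) \<le> \<bar>real c / 2 ^ k - 1 / 3\<bar>"
proof -
  have "3 * c \<noteq> (2 :: nat) ^ k" using not_three_dvd_two_power by (metis dvd_triv_left)
  then have "3 * int c - 2 ^ k \<noteq> 0" by (metis eq_iff_diff_eq_0 of_nat_eq_iff of_nat_mult of_nat_numeral of_nat_power)
  then have "(1 :: real) \<le> of_int \<bar>3 * int c - 2 ^ k\<bar>" by linarith
  also have "\<dots> = \<bar>3 * real c - 2 ^ k\<bar>" by simp
  finally have "1 / (3 * 2 ^ k) \<le> \<bar>3 * real c - 2 ^ k\<bar> / (3 * 2 ^ k)"
    by (intro divide_right_mono) simp_all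
  also have "\<dots> = \<bar>real c / 2 ^ k - 1 / 3\<bar>"
    by (simp add: abs_divide[symmetric] field_simps)
  finally show ?thesis .
qed

lemma bhattacharyya_dyadic_ber_third:
  fixes \<Gamma> :: "('j \<Rightarrow> bit) \<Rightarrow> bit"
  assumes D: "finite D" "card D \<le> s"
  shows "(\<Sum>b\<in>UNIV. sqrt (card {v \<in> D \<rightarrow>\<^sub>E UNIV. \<Gamma> v = b} / 2 ^ card D * ber (1/3) b))
    \<le> 1 - 1 / (72 * 4 ^ s)"
proof -
  define c where "c b = card {v \<in> D \<rightarrow>\<^sub>E UNIV. \<Gamma> v = b}" for b
  define q where "q = c 1 / 2 ^ card D"
  have sum_c: "c 0 + c 1 = (2 :: nat) ^ card D"
    using card_eq_sum_card_fibers[OF finite_bit_funcset[OF D(1)], of UNIV \<Gamma>] D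
    by (simp add: c_def card_bit_funcset sum_UNIV_bit)
  then have "real (c 0) + real (c 1) = 2 ^ card D" by (metis of_nat_add of_nat_numeral of_nat_power)
  then have q0: "c 0 / 2 ^ card D = 1 - q" and q: "0 \<le> q" "q \<le> 1"
    unfolding q_def using sum_c by (simp_all add: field_simps)
  have "(\<Sum>b\<in>UNIV. sqrt (c b / 2 ^ card D * ber (1/3) b)) = sqrt (q * (1/3)) + sqrt ((1 - q) * (1 - 1/3))"
    unfolding sum_UNIV_bit ber_def q0[symmetric] unfolding q_def by (simp add: add.commute)
  also have "\<dots> \<le> 1 - (q - 1/3)\<^sup>2 / 8"
    using q by (intro sqrt_mult_add_sqrt_mult_le) simp_all
  also have "\<dots> \<le> 1 - 1 / (72 * 4 ^ s)"
  proof -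
    have "1 / (3 * 2 ^ s) \<le> (1 :: real) / (3 * 2 ^ card D)"
      using D by (simp add: frac_le power_increasing)
    also have "\<dots> \<le> \<bar>q - 1/3\<bar>" unfolding q_def by (rule dyadic_dist_third_ge)
    finally have "(1 / (3 * 2 ^ s))\<^sup>2 \<le> (q - 1/3)\<^sup>2"
      using abs_le_square_iff[of "1 / (3 * 2 ^ s)" "q - 1/3"] by simp
    moreover have "(4 :: real) ^ s = (2 ^ s)\<^sup>2"
      by (simp add: power2_eq_square flip: power_mult_distrib)
    then have "(1 / (3 * 2 ^ s :: real))\<^sup>2 = 1 / (9 * 4 ^ s)"
      by (simp add: power_mult_distrib power_divide)
    ultimately show ?thesis by simp
  qed
  finally show ?thesis unfolding c_def .
qed

section \<open>The decay rate\<close>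

text \<open>The rate is chosen so that \<open>gamma_rate_step\<close> pays for splitting into atoms, while still
  \<open>1 / gamma_rate s \<le> \<surd>n\<close> in the range \<open>s \<le> \<surd>(log n) / 8\<close> of the theorem.\<close>

definition gamma_rate :: "nat \<Rightarrow> real" where
  "gamma_rate s = 1 / 2 ^ (8 * (s + 1)\<^sup>2)"

lemma gamma_rate_step:
  assumes "0 < s"
  shows "gamma_rate s * (72 * s * 4 ^ s + 1) \<le> gamma_rate (s - 1)"
proof -
  have "s \<le> 2 ^ s" using less_exp[of s] by simp
  then have "72 * s * 4 ^ s \<le> 72 * 2 ^ s * (4 :: nat) ^ s" by simp
  moreover have "1 \<le> 56 * 2 ^ s * (4 :: nat) ^ s" by simp
  ultimately have "72 * s * 4 ^ s + 1 \<le> 128 * 2 ^ s * (4 :: nat) ^ s" by linarith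
  also have "\<dots> = (2 :: nat) ^ (3 * s + 7)"
    by (simp add: power_add power_mult flip: power_mult_distrib)
  also have "\<dots> \<le> 2 ^ (16 * s + 8)" by (intro power_increasing) auto
  finally have "real (72 * s * 4 ^ s + 1) \<le> 2 ^ (16 * s + 8)"
    by (metis of_nat_le_iff of_nat_numeral of_nat_power)
  moreover have "8 * (s + 1)\<^sup>2 = 8 * (s - 1 + 1)\<^sup>2 + (16 * s + 8)"
    using assms by (cases s) (simp_all add: power2_eq_square algebra_simps)
  ultimately show ?thesis
    by (simp add: gamma_rate_def power_add divide_simps)
qed

lemma one_minus_power_le_exp:
  fixes \<eta> :: real
  assumes "0 \<le> \<eta>" "\<eta> \<le> 1"
  shows "(1 - \<eta>) ^ k \<le> exp (- \<eta> * k)"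
proof -
  have "(1 - \<eta>) ^ k \<le> exp (- \<eta>) ^ k"
    using assms exp_ge_add_one_self[of "- \<eta>"] by (intro power_mono) simp_all
  then show ?thesis by (simp add: exp_of_nat_mult[symmetric] mult.commute)
qed

lemma two_power_le_exp: "(2 :: real) ^ k \<le> exp k"
proof -
  have "(2 :: real) ^ k \<le> exp 1 ^ k"
    using exp_ge_add_one_self[of 1] by (intro power_mono) simp_all
  then show ?thesis by (simp add: exp_of_nat_mult[symmetric])
qed

lemma power_le_exp_gamma_rate:
  assumes "real n * gamma_rate s * (72 * 4 ^ s) \<le> k"
  shows "(1 - 1 / (72 * 4 ^ s)) ^ k \<le> exp (- real n * gamma_rate s)"
proof -
  have "1 \<le> (72 :: real) * 4 ^ s" using one_le_power[of "4 :: real" s] by linarith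
  then have "(1 - 1 / (72 * 4 ^ s)) ^ k \<le> exp (- (1 / (72 * 4 ^ s)) * k)"
    by (intro one_minus_power_le_exp) simp_all
  also have "\<dots> \<le> exp (- real n * gamma_rate s)"
    using assms by (simp add: field_simps)
  finally show ?thesis .
qed

lemma two_power_mult_exp_gamma_rate_le:
  assumes "0 < s" "real g \<le> real n * gamma_rate s * (72 * s * 4 ^ s)"
  shows "2 ^ g * exp (- real n * gamma_rate (s - 1)) \<le> exp (- real n * gamma_rate s)"
proof -
  have "real n * (gamma_rate s * (72 * s * 4 ^ s + 1)) \<le> real n * gamma_rate (s - 1)"
    using gamma_rate_step[OF assms(1)] by (intro mult_left_mono) simp_all
  then have "real g - real n * gamma_rate (s - 1) \<le> - real n * gamma_rate s"
    using assms(2) by (simp add: algebra_simps)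
  then have "exp g * exp (- real n * gamma_rate (s - 1)) \<le> exp (- real n * gamma_rate s)"
    by (simp flip: exp_add)
  moreover have "2 ^ g * exp (- real n * gamma_rate (s - 1)) \<le> exp g * exp (- real n * gamma_rate (s - 1))"
    by (intro mult_right_mono two_power_le_exp) simp
  ultimately show ?thesis by linarith
qed

lemma sqrt_le_mult_gamma_rate:
  assumes "16 * (real s + 1)\<^sup>2 \<le> log 2 n" "0 < n"
  shows "sqrt n \<le> n * gamma_rate s"
proof -
  define K where "K = 8 * (s + 1)\<^sup>2"
  have "(2 ^ K)\<^sup>2 = 2 powr real (2 * K)"
    by (subst powr_realpow) (simp_all add: power_mult mult.commute)
  also have "\<dots> \<le> 2 powr log 2 n" using assms(1) by (simp add: K_def add.commute)
  also have "\<dots> = n" using assms(2) by simp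
  finally have "2 ^ K \<le> sqrt n" by (simp add: real_le_rsqrt)
  then have "n / sqrt n \<le> n / 2 ^ K"
    using assms(2) by (intro divide_left_mono) simp_all
  then show ?thesis using assms(2) by (simp add: gamma_rate_def K_def real_div_sqrt)
qed

lemma exp_gamma_rate_le:
  assumes r: "1 \<le> r" "r \<le> 1/8 * sqrt (log 2 n)" and s: "real s \<le> r"
  shows "exp (- real n * gamma_rate s) \<le> 2 powr (r / 2) / real n powr (1 / (r + 1))"
proof -
  have "0 < sqrt (log 2 n)" using r by linarith
  then have "0 < log 2 n" by simp
  moreover have "n \<noteq> 0"
  proof
    assume "n = 0"
    with \<open>0 < log 2 n\<close> show False by (simp add: log_def)
  qed
  ultimately have n: "1 < real n" by simp
  have "(8 * r)\<^sup>2 \<le> log 2 n"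
    using r power_mono[of "8 * r" "sqrt (log 2 n)" 2] \<open>0 < log 2 n\<close> by simp
  moreover have "(real s + 1)\<^sup>2 \<le> (2 * r)\<^sup>2" using r s by (intro power_mono) simp_all
  ultimately have "sqrt n \<le> n * gamma_rate s"
    using n by (intro sqrt_le_mult_gamma_rate) (simp_all add: power_mult_distrib)
  then have "exp (- real n * gamma_rate s) \<le> exp (- sqrt n)" by simp
  also have "\<dots> \<le> 1 / sqrt n"
  proof -
    have "sqrt n \<le> exp (sqrt n)" using exp_ge_add_one_self[of "sqrt n"] by linarith
    then show ?thesis using n by (simp add: exp_minus field_simps)
  qed
  also have "\<dots> = 1 / real n powr (1 / 2)" using n by (simp add: powr_half_sqrt)
  also have "\<dots> \<le> 1 / real n powr (1 / (r + 1))"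
    using r n by (intro divide_left_mono powr_mono) (simp_all add: field_simps)
  also have "\<dots> \<le> 2 powr (r / 2) / real n powr (1 / (r + 1))"
    using r by (intro divide_right_mono ge_one_powr_ge_zero) simp_all
  finally show ?thesis .
qed

section \<open>Induction on the number of forms\<close>

lemma bhattacharyya_le_atoms:
  fixes L :: "'g \<Rightarrow> (nat \<Rightarrow> bit) \<Rightarrow> bit"
  assumes "0 \<le> p" "p \<le> 1" "finite \<Omega>" "finite G"
    and atom: "\<And>a. bhattacharyya p n P {x\<in>\<Omega>. \<forall>g\<in>G. L g x = a g} \<le> e"
  shows "bhattacharyya p n P \<Omega> \<le> 2 ^ card G * e"
proof -
  have "bhattacharyya p n P \<Omega> \<le> (\<Sum>a\<in>G \<rightarrow>\<^sub>E UNIV. bhattacharyya p n P {x\<in>\<Omega>. (\<lambda>g\<in>G. L g x) = a})"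
    using assms by (intro bhattacharyya_le_sum_fibers) auto
  also have "\<dots> = (\<Sum>a\<in>G \<rightarrow>\<^sub>E UNIV. bhattacharyya p n P {x\<in>\<Omega>. \<forall>g\<in>G. L g x = a g})"
  proof (intro sum.cong refl arg_cong[where f = "bhattacharyya p n P"])
    fix a assume "a \<in> G \<rightarrow>\<^sub>E (UNIV :: bit set)"
    then show "{x\<in>\<Omega>. (\<lambda>g\<in>G. L g x) = a} = {x\<in>\<Omega>. \<forall>g\<in>G. L g x = a g}"
      by (simp add: restrict_eq_PiE_iff)
  qed
  also have "\<dots> \<le> (\<Sum>a\<in>G \<rightarrow>\<^sub>E (UNIV :: bit set). e)" by (intro sum_mono atom)
  also have "\<dots> = 2 ^ card G * e" using assms by (simp add: card_bit_funcset)
  finally show ?thesis .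
qed

lemma represents_const_on_atom:
  assumes "represents m \<Omega> (P i) (D i) (L i) (\<Gamma> i)" "i \<in> S"
  shows "represents m {x\<in>\<Omega>. \<forall>(k, j)\<in>Sigma S D. L k j x = a (k, j)} (P i) {} (L i)
           (\<lambda>_. \<Gamma> i (\<lambda>j\<in>D i. a (i, j)))"
proof -
  have "(\<lambda>j\<in>D i. L i j x) = (\<lambda>j\<in>D i. a (i, j))" if "\<forall>(k, j)\<in>Sigma S D. L k j x = a (k, j)" for x
    using that assms(2) by (intro restrict_ext) auto
  then show ?thesis using assms(1) unfolding represents_def by auto
qed

lemma represents_fewer_on_atom:
  assumes rep: "represents m \<Omega> (P i) (D i) (L i) (\<Gamma> i)" and i: "i \<notin> S"
    and G: "finite (Sigma S D)" and ind: "independent_on \<Omega> (Sigma S D) (\<lambda>(k, j). L k j)"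
    and dep: "\<not> independent_on \<Omega> (Sigma (insert i S) D) (\<lambda>(k, j). L k j)"
  shows "\<exists>D' \<Gamma>'. card D' < card (D i) \<and>
           represents m {x\<in>\<Omega>. \<forall>(k, j)\<in>Sigma S D. L k j x = a (k, j)} (P i) D' (L i) \<Gamma>'"
proof -
  let ?L = "\<lambda>(k, j). L k j" and ?A = "{x\<in>\<Omega>. \<forall>(k, j)\<in>Sigma S D. L k j x = a (k, j)}"
  obtain T c where T: "T \<subseteq> Sigma (insert i S) D" "T \<noteq> {}"
    and c: "\<forall>x\<in>\<Omega>. (\<Sum>p\<in>T. ?L p x) = c"
    using dep unfolding independent_on_def by blast
  define T0 where "T0 = T \<inter> Sigma S D"
  define T1 where "T1 = {j. (i, j) \<in> T}"
  have "finite (D i)" using rep unfolding represents_def by blast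
  have T1: "T1 \<subseteq> D i" using T(1) i unfolding T1_def by blast
  then have "finite T1" using \<open>finite (D i)\<close> by (rule finite_subset)
  have T_eq: "T = T0 \<union> Pair i ` T1" using T(1) unfolding T0_def T1_def by blast
  have "T0 \<inter> Pair i ` T1 = {}" "finite T0" using i G unfolding T0_def by auto
  then have split: "(\<Sum>p\<in>T. ?L p x) = (\<Sum>p\<in>T0. ?L p x) + (\<Sum>j\<in>T1. L i j x)" for x
    unfolding T_eq using \<open>finite T1\<close> by (simp add: sum.union_disjoint sum.reindex inj_on_def)
  have "T1 \<noteq> {}"
  proof
    assume "T1 = {}"
    then have "T \<subseteq> Sigma S D" using T_eq unfolding T0_def by blast
    then show False using ind T(2) c unfolding independent_on_def by blast
  qed
  then obtain j0 where "j0 \<in> T1" by blast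
  have "(\<Sum>p\<in>T0. ?L p x) = (\<Sum>p\<in>T0. a p)" if "x \<in> ?A" for x
    using that by (intro sum.cong) (auto simp: T0_def)
  then have "\<forall>x\<in>?A. (\<Sum>j\<in>T1. L i j x) = c + (\<Sum>p\<in>T0. a p)"
    using c split by (simp add: bit_add_eq_iff add.commute)
  from represents_remove[OF represents_subset[OF rep] \<open>j0 \<in> T1\<close> T1 this]
  have "represents m ?A (P i) (D i - {j0}) (L i)
      (\<lambda>v. \<Gamma> i (\<lambda>j\<in>D i. if j = j0 then c + (\<Sum>p\<in>T0. a p) + (\<Sum>k\<in>T1 - {j0}. v k) else v j))"
    by blast
  moreover have "card (D i - {j0}) < card (D i)"
    using \<open>finite (D i)\<close> \<open>j0 \<in> T1\<close> T1 by (intro card_Diff1_less) auto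
  ultimately show ?thesis by blast
qed

lemma represents_on_atom:
  fixes D :: "nat \<Rightarrow> 'j set"
  assumes rep: "represents m \<Omega> (P i) (D i) (L i) (\<Gamma> i)" "card (D i) \<le> s"
    and G: "finite (Sigma S D)" and ind: "independent_on \<Omega> (Sigma S D) (\<lambda>(k, j). L k j)"
    and max: "i \<notin> S \<Longrightarrow> \<not> independent_on \<Omega> (Sigma (insert i S) D) (\<lambda>(k, j). L k j)"
  shows "\<exists>(D' :: 'j set) L' \<Gamma>'.
    represents m {x\<in>\<Omega>. \<forall>(k, j)\<in>Sigma S D. L k j x = a (k, j)} (P i) D' L' \<Gamma>' \<and> card D' \<le> s - 1"
proof (cases "i \<in> S")
  case True
  then show ?thesis
    using represents_const_on_atom[where P = P and D = D and L = L and \<Gamma> = \<Gamma> and a = a, OF rep(1) True]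
    by fastforce
next
  case False
  then show ?thesis
    using represents_fewer_on_atom[where P = P and D = D and L = L and \<Gamma> = \<Gamma> and a = a, OF rep(1) False G ind max]
      rep(2) by fastforce
qed

lemma bhattacharyya_third_le_independent:
  assumes \<Omega>: "affine_subspace m \<Omega>" and S: "S \<subseteq> {0..<n}"
    and rep: "\<forall>i\<in>S. represents m \<Omega> (P i) (D i) (L i) (\<Gamma> i) \<and> card (D i) \<le> s"
    and ind: "independent_on \<Omega> (Sigma S D) (\<lambda>(i, j). L i j)"
  shows "bhattacharyya (1/3) n P \<Omega> \<le> (1 - 1 / (72 * 4 ^ s)) ^ card S"
proof (cases "\<Omega> = {}")
  case False
  have "bhattacharyya (1/3) n P \<Omega>
      \<le> (\<Prod>i\<in>S. \<Sum>b\<in>UNIV. sqrt (card {v \<in> D i \<rightarrow>\<^sub>E UNIV. \<Gamma> i v = b} / 2 ^ card (D i) * ber (1/3) b))"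
    using rep by (intro bhattacharyya_le_prod_independent[OF _ _ \<Omega> False S _ ind]) auto
  also have "\<dots> \<le> (\<Prod>i\<in>S. 1 - 1 / (72 * 4 ^ s))"
    using rep by (intro prod_mono conjI sum_nonneg bhattacharyya_dyadic_ber_third)
      (auto simp: represents_def ber_def)
  finally show ?thesis by simp
next
  case True
  have "1 \<le> (72 :: real) * 4 ^ s" using one_le_power[of "4 :: real" s] by linarith
  then show ?thesis using True by simp
qed

lemma card_Sigma_le:
  assumes "finite S" "\<forall>i\<in>S. finite (D i) \<and> card (D i) \<le> s"
  shows "card (Sigma S D) \<le> card S * s"
proof -
  have "card (Sigma S D) = (\<Sum>i\<in>S. card (D i))" using assms by (simp add: card_SigmaI)
  also have "\<dots> \<le> card S * s" using assms sum_bounded_above[of S "\<lambda>i. card (D i)" s] by auto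
  finally show ?thesis .
qed

lemma bhattacharyya_third_le_exp_gamma_rate_step:
  fixes D :: "nat \<Rightarrow> 'j set"
  assumes \<Omega>: "affine_subspace m \<Omega>" and "0 < s"
    and rep: "\<forall>i<n. represents m \<Omega> (P i) (D i) (L i) (\<Gamma> i) \<and> card (D i) \<le> s"
    and S: "S \<subseteq> {0..<n}" and ind: "independent_on \<Omega> (Sigma S D) (\<lambda>(i, j). L i j)"
    and max: "\<forall>i\<in>{0..<n} - S. \<not> independent_on \<Omega> (Sigma (insert i S) D) (\<lambda>(i, j). L i j)"
    and few: "card S \<le> real n * gamma_rate s * (72 * 4 ^ s)"
    and IH: "\<And>\<Omega>'. affine_subspace m \<Omega>' \<Longrightarrow>
      \<forall>i<n. \<exists>(D :: 'j set) L \<Gamma>. represents m \<Omega>' (P i) D L \<Gamma> \<and> card D \<le> s - 1 \<Longrightarrow>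
      bhattacharyya (1/3) n P \<Omega>' \<le> exp (- real n * gamma_rate (s - 1))"
  shows "bhattacharyya (1/3) n P \<Omega> \<le> exp (- real n * gamma_rate s)"
proof -
  let ?L = "\<lambda>(i, j). L i j" and ?atom = "\<lambda>a. {x\<in>\<Omega>. \<forall>(k, j)\<in>Sigma S D. L k j x = a (k, j)}"
  have "finite S" using S finite_subset by blast
  have rep_S: "\<forall>i\<in>S. represents m \<Omega> (P i) (D i) (L i) (\<Gamma> i) \<and> card (D i) \<le> s"
    using rep S by auto
  then have card_D: "\<forall>i\<in>S. finite (D i) \<and> card (D i) \<le> s" by (auto simp: represents_def)
  with \<open>finite S\<close> have G: "finite (Sigma S D)" by auto
  have atom: "bhattacharyya (1/3) n P (?atom a) \<le> exp (- real n * gamma_rate (s - 1))" for a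
  proof (rule IH)
    have "\<forall>p\<in>Sigma S D. affine_on m \<Omega> (?L p)"
      using rep_S \<Omega> by (auto simp: represents_def affine_subspace_def intro: affine_fn_affine_on)
    then show "affine_subspace m (?atom a)"
      using affine_subspace_fiber[OF \<Omega>, of "Sigma S D" ?L a] by simp
    show "\<forall>i<n. \<exists>(D :: 'j set) L \<Gamma>. represents m (?atom a) (P i) D L \<Gamma> \<and> card D \<le> s - 1"
    proof (intro allI impI)
      fix i assume "i < n"
      then show "\<exists>(D' :: 'j set) L' \<Gamma>'. represents m (?atom a) (P i) D' L' \<Gamma>' \<and> card D' \<le> s - 1"
        using rep max G ind by (intro represents_on_atom) auto
    qed
  qed
  have "bhattacharyya (1/3) n P \<Omega> \<le> 2 ^ card (Sigma S D) * exp (- real n * gamma_rate (s - 1))"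
    using G affine_subspace_finite[OF \<Omega>] atom
    by (intro bhattacharyya_le_atoms[where L = "\<lambda>(i, j). L i j"]) simp_all
  also have "\<dots> \<le> exp (- real n * gamma_rate s)"
  proof (rule two_power_mult_exp_gamma_rate_le[OF \<open>0 < s\<close>])
    have "real (card (Sigma S D)) \<le> real s * card S"
      using card_Sigma_le[OF \<open>finite S\<close> card_D] by (metis of_nat_le_iff of_nat_mult mult.commute)
    also have "\<dots> \<le> real s * (real n * gamma_rate s * (72 * 4 ^ s))"
      using few by (intro mult_left_mono) simp_all
    finally show "real (card (Sigma S D)) \<le> real n * gamma_rate s * (72 * s * 4 ^ s)"
      by (simp add: ac_simps)
  qed
  finally show ?thesis .
qed

lemma bhattacharyya_third_le_exp_gamma_rate:
  assumes "affine_subspace m \<Omega>" "\<forall>i<n. \<exists>(D :: 'j set) L \<Gamma>. represents m \<Omega> (P i) D L \<Gamma> \<and> card D \<le> s"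
  shows "bhattacharyya (1/3) n P \<Omega> \<le> exp (- real n * gamma_rate s)"
  using assms
proof (induction s arbitrary: \<Omega> rule: less_induct)
  case (less s)
  obtain D :: "nat \<Rightarrow> 'j set" and L \<Gamma>
    where rep: "\<forall>i<n. represents m \<Omega> (P i) (D i) (L i) (\<Gamma> i) \<and> card (D i) \<le> s"
    using choice_lessThan3[OF less.prems(2)] by blast
  let ?L = "\<lambda>(i, j). L i j"
  obtain S where S: "S \<subseteq> {0..<n}" and ind: "independent_on \<Omega> (Sigma S D) ?L"
    and max: "\<forall>i\<in>{0..<n} - S. \<not> independent_on \<Omega> (Sigma (insert i S) D) ?L"
    by (rule finite_ex_maximal_subset[of "{0..<n}" "\<lambda>S. independent_on \<Omega> (Sigma S D) ?L"])
      (auto simp: independent_on_def)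
  consider (many) "real n * gamma_rate s * (72 * 4 ^ s) \<le> card S"
    | (few) "card S \<le> real n * gamma_rate s * (72 * 4 ^ s)" "0 < s"
  proof (cases "s = 0")
    case True
    then have "D i = {}" if "i < n" for i
      using rep that by (auto simp: represents_def)
    then have "Sigma (insert i S) D = {}" if "i < n" for i
      using S that by auto
    then have "S = {0..<n}" using max S unfolding independent_on_def by auto
    moreover have "real n * gamma_rate 0 * 72 \<le> n" by (simp add: gamma_rate_def)
    ultimately show ?thesis using that True by simp
  qed (use that in linarith)
  then show ?case
  proof cases
    case many
    have "\<forall>i\<in>S. represents m \<Omega> (P i) (D i) (L i) (\<Gamma> i) \<and> card (D i) \<le> s"
      using rep S by auto
    then show ?thesis
      using bhattacharyya_third_le_independent[OF less.prems(1) S _ ind]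
        power_le_exp_gamma_rate[OF many] by (meson order_trans)
  next
    case few
    show ?thesis
    proof (rule bhattacharyya_third_le_exp_gamma_rate_step[OF less.prems(1) few(2) rep S ind max few(1)])
      show "bhattacharyya (1/3) n P \<Omega>' \<le> exp (- real n * gamma_rate (s - 1))"
        if "affine_subspace m \<Omega>'" "\<forall>i<n. \<exists>(D :: 'j set) L \<Gamma>. represents m \<Omega>' (P i) D L \<Gamma> \<and> card D \<le> s - 1"
        for \<Omega>'
        using less.IH[of "s - 1" \<Omega>'] that few(2) by simp
    qed
  qed
qed

theorem theorem8p6:
  "\<exists>c C :: real. c > 0 \<and> C > 0 \<and>
     (\<forall>(n :: nat) (m :: nat) (r :: real) (P :: nat \<Rightarrow> (nat \<Rightarrow> bit) \<Rightarrow> bit).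
        1 \<le> r \<longrightarrow> r \<le> c * sqrt (log 2 (real n)) \<longrightarrow>
        (\<forall>i<n. real (rank1 m (P i)) \<le> r) \<longrightarrow>
        tv_dist n (push_dist m n P) (ber_prod (1/3) n)
          \<ge> 1 - C * 2 powr (r / 2) / real n powr (1 / (r + 1)))"
proof -
  have "1 - 1 * 2 powr (r / 2) / real n powr (1 / (r + 1)) \<le> tv_dist n (push_dist m n P) (ber_prod (1/3) n)"
    if r: "1 \<le> r" "r \<le> 1/8 * sqrt (log 2 (real n))" and rank: "\<forall>i<n. real (rank1 m (P i)) \<le> r"
    for n m :: nat and r :: real and P :: "nat \<Rightarrow> (nat \<Rightarrow> bit) \<Rightarrow> bit"
  proof -
    define s where "s = nat \<lfloor>r\<rfloor>"
    have "real s \<le> r" using r(1) by (simp add: s_def)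
    have "rank1 m (P i) \<le> s" if "i < n" for i
      using rank that unfolding s_def by (simp add: le_nat_floor)
    then have "\<forall>i<n. \<exists>(D :: nat set) L \<Gamma>. represents m (cube m) (P i) D L \<Gamma> \<and> card D \<le> s"
      using represents_rank1 by (metis order_eq_refl order_trans)
    then have "bhattacharyya (1/3) n P (cube m) \<le> exp (- real n * gamma_rate s)"
      by (rule bhattacharyya_third_le_exp_gamma_rate[OF affine_subspace_cube])
    also have "\<dots> \<le> 1 * 2 powr (r / 2) / real n powr (1 / (r + 1))"
      using exp_gamma_rate_le[OF r \<open>real s \<le> r\<close>] by simp
    finally show ?thesis using tv_dist_ge_one_minus_bhattacharyya[of "1/3" n P m] by simp
  qed
  then show ?thesis by (intro exI[of _ "1/8"] exI[of _ 1]) auto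
qed

end
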